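(* Let the type set be a disjoint union $\{1,\dots,V\}=\bigcup_\alpha V_\alpha$ of isomer classes, with internal energies $I_v$, parameters $\nu_v>0$ constant on each class $V_\alpha$, and $\beta>0$. Let $p_v>0$ and assume: (i) binary reaction base rates $b_{\hat\imath\hat\jmath}$, $\hat\imath=(v,w)$, $\hat\jmath=(v',w')$, satisfy $p_vp_wb_{\hat\imath\hat\jmath}=p_{v'}p_{w'}b_{\hat\jmath\hat\imath}$; (ii) unary reaction base rates $b_{vw}$, allowed only for $v,w$ in the same class, satisfy $p_vb_{vw}=p_wb_{wv}$; (iii) for every binary reaction $v,w\to v',w'$, $\nu_v+\nu_w=\nu_{v'}+\nu_{w'}$. With $f_v$, $f_{\hat\imath}$, $a_{vw}(U)$, $a_{\hat\imath\hat\jmath}(U)$ as in the context, set $$\pi_v=p_ve^{-\beta I_v}\beta^{-\nu_v}.$$ Then for every binary reaction $\hat\imath\to\hat\jmath$ and all $U>\max(I_{\hat\imath},I_{\hat\jmath})$, $$\pi_v\pi_wf_{\hat\imath}(U)a_{\hat\imath\hat\jmath}(U)=\pi_{v'}\pi_{w'}f_{\hat\jmath}(U)a_{\hat\jmath\hat\imath}(U),$$ and for every unary reaction $v\to w$ within a class and all $U>\max(I_v,I_w)$, $$\pi_vf_v(U)a_{vw}(U)=\pi_wf_w(U)a_{wv}(U).$$ That is, the factorized distribution with type weights $\pi_v$ and type-$v$ full-energy densities $f_v$ is a reversible invariant distribution for both binary and unary reactions.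
   Context: For a type $v$, $f_v$ is the shifted Gamma density $f_v(U)=\frac{\beta^{\nu_v}}{\Gamma(\nu_v)}(U-I_v)^{\nu_v-1}e^{-\beta(U-I_v)}$ for $U>I_v$ and $0$ otherwise ($U$ = full energy = internal plus kinetic). For a pair $\hat\imath=(v,w)$, $I_{\hat\imath}=I_v+I_w$, $\nu_{\hat\imath}=\nu_v+\nu_w$, and $f_{\hat\imath}=f_v*f_w$ (convolution), the density of the pair's total full energy. Unary rates: $a_{vw}(U)=(U-I_w)^{\nu_w-1}b_{vw}$ if $U\ge I_w$, $0$ otherwise, where $U$ is the full energy of the molecule, which is conserved in the reaction. Binary rates: $a_{\hat\imath\hat\jmath}(U)=(U-I_{\hat\jmath})^{\nu_{\hat\jmath}-1}b_{\hat\imath\hat\jmath}$ if $U\ge I_{\hat\jmath}$, $0$ otherwise, where $U$ is the total full energy of the reacting pair, which is conserved in the reaction. *)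

theory Defs
  imports "HOL-Analysis.Analysis"
begin

definition fdens :: "real \<Rightarrow> ('t \<Rightarrow> real) \<Rightarrow> ('t \<Rightarrow> real) \<Rightarrow> 't \<Rightarrow> real \<Rightarrow> real" where
  "fdens \<beta> I \<nu> v U =
     (if U > I v then \<beta> powr (\<nu> v) / Gamma (\<nu> v) * (U - I v) powr (\<nu> v - 1) * exp (- \<beta> * (U - I v))
      else 0)"

definition fpair :: "real \<Rightarrow> ('t \<Rightarrow> real) \<Rightarrow> ('t \<Rightarrow> real) \<Rightarrow> 't \<times> 't \<Rightarrow> real \<Rightarrow> real" where
  "fpair \<beta> I \<nu> i U = (LINT x|lborel. fdens \<beta> I \<nu> (fst i) x * fdens \<beta> I \<nu> (snd i) (U - x))"

definition Ipair :: "('t \<Rightarrow> real) \<Rightarrow> 't \<times> 't \<Rightarrow> real" where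
  "Ipair I i = I (fst i) + I (snd i)"

definition nupair :: "('t \<Rightarrow> real) \<Rightarrow> 't \<times> 't \<Rightarrow> real" where
  "nupair \<nu> i = \<nu> (fst i) + \<nu> (snd i)"

definition aun :: "('t \<Rightarrow> real) \<Rightarrow> ('t \<Rightarrow> real) \<Rightarrow> ('t \<Rightarrow> 't \<Rightarrow> real) \<Rightarrow> 't \<Rightarrow> 't \<Rightarrow> real \<Rightarrow> real" where
  "aun I \<nu> b v w U = (if U \<ge> I w then (U - I w) powr (\<nu> w - 1) * b v w else 0)"

definition abin :: "('t \<Rightarrow> real) \<Rightarrow> ('t \<Rightarrow> real) \<Rightarrow> ('t \<times> 't \<Rightarrow> 't \<times> 't \<Rightarrow> real)
    \<Rightarrow> 't \<times> 't \<Rightarrow> 't \<times> 't \<Rightarrow> real \<Rightarrow> real" where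
  "abin I \<nu> b i j U = (if U \<ge> Ipair I j then (U - Ipair I j) powr (nupair \<nu> j - 1) * b i j else 0)"

definition piw :: "real \<Rightarrow> ('t \<Rightarrow> real) \<Rightarrow> ('t \<Rightarrow> real) \<Rightarrow> ('t \<Rightarrow> real) \<Rightarrow> 't \<Rightarrow> real" where
  "piw \<beta> I \<nu> p v = p v * exp (- \<beta> * I v) * \<beta> powr (- \<nu> v)"

end

theory Submission
  imports Defs
begin

(* Write g(c,n) for the shifted Gamma density with shift c and shape n,
   g(c,n)(U) = beta^n / Gamma(n) (U-c)^(n-1) e^(-beta (U-c)) for U > c.
   Two facts about these densities carry the whole argument:
   (1) g(c,n) * g(d,m) = g(c+d, n+m)  (convolution; via the Beta integral), so the pair
       density f_(v,w) is again a shifted Gamma density with shift I_v+I_w and shape nu_v+nu_w;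
   (2) e^(-beta c) beta^(-n) g(c,n)(U) = e^(-beta U) (U-c)^(n-1) / Gamma(n), i.e. the weights
       pi_v exactly cancel the type-dependent exponential and power-of-beta factors.
   Hence pi_v f_v(U) a_vw(U) = p_v b_vw e^(-beta U) (U-I_v)^(nu-1) (U-I_w)^(nu-1) / Gamma(nu),
   which is symmetric in (v,w) up to the factor p_v b_vw; the detailed balance hypothesis on
   the base rates and the equality of shapes (within a class, resp. across a binary reaction)
   then give the claimed reversibility, and the binary case is identical with pairs. *)

definition gamma_shift :: "real \<Rightarrow> real \<Rightarrow> real \<Rightarrow> real \<Rightarrow> real" where
  "gamma_shift \<beta> c n U =
     (if U > c then \<beta> powr n / Gamma n * (U - c) powr (n - 1) * exp (- \<beta> * (U - c)) else 0)"

lemma fdens_gamma_shift: "fdens \<beta> I \<nu> v = gamma_shift \<beta> (I v) (\<nu> v)"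
  by (simp add: fun_eq_iff fdens_def gamma_shift_def)

lemma Beta_integral_interval:
  fixes a b S c :: real
  assumes a: "a > 0" and b: "b > 0" and S: "S > 0"
  shows "((\<lambda>x. (x - c) powr (a - 1) * (c + S - x) powr (b - 1)) has_integral
            S powr (a + b - 1) * Beta a b) {c..c+S}"
proof -
  let ?B = "\<lambda>t::real. t powr (a - 1) * (1 - t) powr (b - 1)"
  have B: "(?B has_integral Beta a b) (cbox 0 1)"
    using has_integral_Beta_real[OF a b] by simp
  have ends: "(S*S+S*c)/S = S+c" using S by (simp add: field_simps)
  from has_integral_affinity'[OF B, of "1/S" "-c/S"] S
  have "((\<lambda>x. ?B ((1/S) * x + - c/S)) has_integral (Beta a b * S)) {c..c+S}"
    by (simp add: field_simps ends)
  then have scaled: "((\<lambda>x. (S powr (a-1) * S powr (b-1)) * ?B ((1/S) * x + - c/S)) has_integral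
        (S powr (a-1) * S powr (b-1)) * (Beta a b * S)) {c..c+S}"
    by (rule has_integral_mult_right)
  have "S powr (a + b - 1) = S powr ((a-1) + (b-1) + 1)" by simp
  also have "\<dots> = S powr (a-1) * S powr (b-1) * S powr 1" by (simp only: powr_add)
  finally have const: "(S powr (a-1) * S powr (b-1)) * (Beta a b * S) = S powr (a + b - 1) * Beta a b"
    using S by simp
  show ?thesis
  proof (rule has_integral_eq[OF _ scaled[unfolded const]])
    fix x assume x: "x \<in> {c..c+S}"
    have "(1/S) * x + - c/S = (x - c) / S" and "1 - (x - c) / S = (c + S - x) / S"
      using S by (simp_all add: field_simps)
    then show "S powr (a - 1) * S powr (b - 1) * ?B ((1/S) * x + - c/S) =
        (x - c) powr (a - 1) * (c + S - x) powr (b - 1)"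
      using x S by (simp add: powr_divide)
  qed
qed

text \<open>Convolution of shifted Gamma densities: shifts and shapes add.  Below the combined
  shift both sides vanish; above it the integrand is a rescaled Beta integrand.\<close>
lemma gamma_shift_convolution:
  assumes n: "n > 0" and m: "m > 0" and \<beta>: "\<beta> > 0"
  shows "(LINT x|lborel. gamma_shift \<beta> c n x * gamma_shift \<beta> d m (U - x))
       = gamma_shift \<beta> (c + d) (n + m) U"
proof (cases "U > c + d")
  case False
  then have "(\<lambda>x. gamma_shift \<beta> c n x * gamma_shift \<beta> d m (U - x)) = (\<lambda>x. 0)"
    by (auto simp: fun_eq_iff gamma_shift_def)
  with False show ?thesis by (simp add: gamma_shift_def)
next
  case True
  define S where "S = U - (c + d)"
  have S: "S > 0" using True by (simp add: S_def)
  define K where "K = \<beta> powr n / Gamma n * (\<beta> powr m / Gamma m) * exp (- \<beta> * S)"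
  define h where "h = (\<lambda>x. (x - c) powr (n - 1) * (c + S - x) powr (m - 1))"
  define F where "F = (\<lambda>x. if x \<in> {c..c + S} then K * h x else 0)"
  have integrand: "gamma_shift \<beta> c n x * gamma_shift \<beta> d m (U - x) = F x" for x
  proof -
    have "exp (- \<beta> * (x - c)) * exp (- \<beta> * (U - x - d)) = exp (- \<beta> * S)"
      by (simp add: S_def exp_add[symmetric] algebra_simps)
    moreover have "U - x - d = c + S - x" by (simp add: S_def)
    ultimately show ?thesis
      by (auto simp: gamma_shift_def F_def h_def K_def S_def algebra_simps)
  qed
  have K: "K \<ge> 0" unfolding K_def using \<beta> n m by (simp add: Gamma_real_pos less_imp_le)
  have Fi: "(F has_integral K * (S powr (n + m - 1) * Beta n m)) UNIV"
    unfolding F_def has_integral_restrict_UNIV h_def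
    by (rule has_integral_mult_right[OF Beta_integral_interval[OF n m S]])
  have Fnn: "F x \<ge> 0" for x unfolding F_def h_def using K by auto
  have Fm: "F \<in> borel_measurable borel" unfolding F_def h_def by measurable
  have "integral\<^sup>N lborel F = K * (S powr (n + m - 1) * Beta n m)"
    by (rule nn_integral_has_integral_lborel[OF Fm Fnn Fi])
  moreover have "K * (S powr (n + m - 1) * Beta n m) \<ge> 0"
    using K n m by (simp add: Beta_def Gamma_real_pos less_imp_le)
  ultimately have "(LINT x|lborel. F x) = K * (S powr (n + m - 1) * Beta n m)"
    using Fm Fnn by (subst integral_eq_nn_integral) auto
  moreover have "(LINT x|lborel. gamma_shift \<beta> c n x * gamma_shift \<beta> d m (U - x))
      = (LINT x|lborel. F x)"
    by (simp only: integrand)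
  moreover have "K * (S powr (n + m - 1) * Beta n m) =
     \<beta> powr (n + m) / Gamma (n + m) * S powr (n + m - 1) * exp (- \<beta> * S)"
    using Gamma_real_pos[OF n] Gamma_real_pos[OF m]
    by (simp add: K_def Beta_def powr_add field_simps)
  ultimately show ?thesis
    using True by (simp add: gamma_shift_def S_def)
qed

lemma fpair_gamma_shift:
  assumes "\<nu> v > 0" and "\<nu> w > 0" and "\<beta> > 0"
  shows "fpair \<beta> I \<nu> (v, w) = gamma_shift \<beta> (Ipair I (v, w)) (nupair \<nu> (v, w))"
  using gamma_shift_convolution[OF assms]
  by (simp add: fun_eq_iff fpair_def fdens_gamma_shift Ipair_def nupair_def)

lemma weighted_gamma_shift:
  assumes "\<beta> > 0" and "U > c"
  shows "exp (- \<beta> * c) * \<beta> powr (- n) * gamma_shift \<beta> c n U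
       = exp (- \<beta> * U) * (U - c) powr (n - 1) / Gamma n"
proof -
  have "exp (- \<beta> * c) * exp (- \<beta> * (U - c)) = exp (- \<beta> * U)"
    by (simp add: exp_add[symmetric] algebra_simps)
  moreover have "\<beta> powr (- n) * \<beta> powr n = 1"
    using assms(1) by (simp add: powr_add[symmetric])
  ultimately show ?thesis
    using assms(2) by (simp add: gamma_shift_def field_simps)
qed

lemma piw_fdens:
  assumes "\<beta> > 0" and "U > I v"
  shows "piw \<beta> I \<nu> p v * fdens \<beta> I \<nu> v U
       = p v * (exp (- \<beta> * U) * (U - I v) powr (\<nu> v - 1) / Gamma (\<nu> v))"
  using weighted_gamma_shift[OF assms, of "\<nu> v"]
  by (simp add: piw_def fdens_gamma_shift mult.assoc)

text \<open>Weighted pair density: the product of the two weights is the weight of the pair.\<close>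
lemma piw_fpair:
  assumes "\<nu> v > 0" and "\<nu> w > 0" and \<beta>: "\<beta> > 0" and U: "U > Ipair I (v, w)"
  shows "piw \<beta> I \<nu> p v * piw \<beta> I \<nu> p w * fpair \<beta> I \<nu> (v, w) U
       = p v * p w * (exp (- \<beta> * U) * (U - Ipair I (v, w)) powr (nupair \<nu> (v, w) - 1)
           / Gamma (nupair \<nu> (v, w)))"
proof -
  have exps: "exp (- \<beta> * I v) * exp (- \<beta> * I w) = exp (- \<beta> * Ipair I (v, w))"
    by (simp add: Ipair_def exp_add[symmetric] algebra_simps)
  have powrs: "\<beta> powr (- \<nu> v) * \<beta> powr (- \<nu> w) = \<beta> powr (- nupair \<nu> (v, w))"
    by (simp add: nupair_def powr_add[symmetric])
  have "piw \<beta> I \<nu> p v * piw \<beta> I \<nu> p w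
      = p v * p w * ((exp (- \<beta> * I v) * exp (- \<beta> * I w)) * (\<beta> powr (- \<nu> v) * \<beta> powr (- \<nu> w)))"
    unfolding piw_def by (simp only: ac_simps)
  also have "\<dots> = p v * p w * (exp (- \<beta> * Ipair I (v, w)) * \<beta> powr (- nupair \<nu> (v, w)))"
    unfolding exps powrs ..
  finally have weights: "piw \<beta> I \<nu> p v * piw \<beta> I \<nu> p w
      = p v * p w * (exp (- \<beta> * Ipair I (v, w)) * \<beta> powr (- nupair \<nu> (v, w)))" .
  have "piw \<beta> I \<nu> p v * piw \<beta> I \<nu> p w * fpair \<beta> I \<nu> (v, w) U
      = p v * p w * (exp (- \<beta> * Ipair I (v, w)) * \<beta> powr (- nupair \<nu> (v, w))
          * gamma_shift \<beta> (Ipair I (v, w)) (nupair \<nu> (v, w)) U)"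
    unfolding weights fpair_gamma_shift[where I=I, OF assms(1-3)] by (simp only: mult.assoc)
  then show ?thesis
    unfolding weighted_gamma_shift[OF \<beta> U] .
qed

theorem theorem8:
  fixes cls :: "'t::finite \<Rightarrow> 'c"
    and I \<nu> p :: "'t \<Rightarrow> real"
    and \<beta> :: real
    and bb :: "'t \<times> 't \<Rightarrow> 't \<times> 't \<Rightarrow> real"
    and bu :: "'t \<Rightarrow> 't \<Rightarrow> real"
  assumes nu_pos: "\<And>v. \<nu> v > 0"
    and nu_class: "\<And>v w. cls v = cls w \<Longrightarrow> \<nu> v = \<nu> w"
    and beta_pos: "\<beta> > 0"
    and p_pos: "\<And>v. p v > 0"
    and bin_db: "\<And>v w v' w'. p v * p w * bb (v, w) (v', w') = p v' * p w' * bb (v', w') (v, w)"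
    and un_class: "\<And>v w. bu v w \<noteq> 0 \<Longrightarrow> cls v = cls w"
    and un_db: "\<And>v w. p v * bu v w = p w * bu w v"
    and bin_nu: "\<And>v w v' w'. bb (v, w) (v', w') \<noteq> 0 \<Longrightarrow> \<nu> v + \<nu> w = \<nu> v' + \<nu> w'"
  shows "(\<forall>v w v' w' U. bb (v, w) (v', w') \<noteq> 0 \<longrightarrow> U > max (Ipair I (v, w)) (Ipair I (v', w')) \<longrightarrow>
            piw \<beta> I \<nu> p v * piw \<beta> I \<nu> p w * fpair \<beta> I \<nu> (v, w) U * abin I \<nu> bb (v, w) (v', w') U
          = piw \<beta> I \<nu> p v' * piw \<beta> I \<nu> p w' * fpair \<beta> I \<nu> (v', w') U * abin I \<nu> bb (v', w') (v, w) U)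
       \<and> (\<forall>v w U. bu v w \<noteq> 0 \<longrightarrow> cls v = cls w \<longrightarrow> U > max (I v) (I w) \<longrightarrow>
            piw \<beta> I \<nu> p v * fdens \<beta> I \<nu> v U * aun I \<nu> bu v w U
          = piw \<beta> I \<nu> p w * fdens \<beta> I \<nu> w U * aun I \<nu> bu w v U)"
proof (intro conjI allI impI)
  fix v w v' w' U
  assume "bb (v, w) (v', w') \<noteq> 0" and U: "U > max (Ipair I (v, w)) (Ipair I (v', w'))"
  then have shape: "nupair \<nu> (v', w') = nupair \<nu> (v, w)"
    using bin_nu by (simp add: nupair_def)
  define n where "n = nupair \<nu> (v, w)"
  define S S' where "S = U - Ipair I (v, w)" and "S' = U - Ipair I (v', w')"
  have Ui: "U > Ipair I (v, w)" and Uj: "U > Ipair I (v', w')" using U by auto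
  have "piw \<beta> I \<nu> p v * piw \<beta> I \<nu> p w * fpair \<beta> I \<nu> (v, w) U * abin I \<nu> bb (v, w) (v', w') U
      = (p v * p w * bb (v, w) (v', w')) * (exp (- \<beta> * U) / Gamma n * S powr (n - 1) * S' powr (n - 1))"
    unfolding piw_fpair[OF nu_pos nu_pos beta_pos Ui] abin_def
    using Uj by (simp add: shape n_def S_def S'_def)
  also have "\<dots> = piw \<beta> I \<nu> p v' * piw \<beta> I \<nu> p w' * fpair \<beta> I \<nu> (v', w') U * abin I \<nu> bb (v', w') (v, w) U"
    unfolding bin_db[of v w v' w'] piw_fpair[OF nu_pos nu_pos beta_pos Uj] abin_def
    using Ui by (simp add: shape n_def S_def S'_def)
  finally show "piw \<beta> I \<nu> p v * piw \<beta> I \<nu> p w * fpair \<beta> I \<nu> (v, w) U * abin I \<nu> bb (v, w) (v', w') U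
     = piw \<beta> I \<nu> p v' * piw \<beta> I \<nu> p w' * fpair \<beta> I \<nu> (v', w') U * abin I \<nu> bb (v', w') (v, w) U" .
next
  fix v w U
  assume "bu v w \<noteq> 0" and "cls v = cls w" and U: "U > max (I v) (I w)"
  then have shape: "\<nu> w = \<nu> v" using nu_class by metis
  have Uv: "U > I v" and Uw: "U > I w" using U by auto
  have "piw \<beta> I \<nu> p v * fdens \<beta> I \<nu> v U * aun I \<nu> bu v w U
      = (p v * bu v w) * (exp (- \<beta> * U) / Gamma (\<nu> v) * (U - I v) powr (\<nu> v - 1) * (U - I w) powr (\<nu> v - 1))"
    unfolding piw_fdens[where I=I and v=v, OF beta_pos Uv] aun_def using Uw by (simp add: shape)
  also have "\<dots> = piw \<beta> I \<nu> p w * fdens \<beta> I \<nu> w U * aun I \<nu> bu w v U"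
    unfolding un_db[of v w] piw_fdens[where I=I and v=w, OF beta_pos Uw] aun_def using Uv by (simp add: shape)
  finally show "piw \<beta> I \<nu> p v * fdens \<beta> I \<nu> v U * aun I \<nu> bu v w U
      = piw \<beta> I \<nu> p w * fdens \<beta> I \<nu> w U * aun I \<nu> bu w v U" .
qed

end
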